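(* Let $\omega=(\omega_1,\omega_2)\in\mathbb{R}^2$ be a frequency vector such that $\alpha:=\omega_1/\omega_2$ is irrational with (finite) Roth--Liouville irrationality measure $\mu(\alpha)$. Then $H^s_\omega\hookrightarrow Y^\sigma_\omega$ (continuous embedding) whenever $0\le\sigma<s-\mu(\alpha)+1$.
   Context: The Roth--Liouville irrationality measure $\mu(\alpha)$ is the supremum of all $\nu\ge1$ for which there exist infinitely many coprime pairs $(p,q)$, $q>0$, with $|\alpha-p/q|<q^{-\nu}$. On $\mathbb{T}^2=\mathbb{R}^2/\mathbb{Z}^2$ with Fourier coefficients $\hat u(n)$: $\langle\nabla\rangle^\sigma$ has symbol $\langle n\rangle^\sigma$, $\langle\partial_x\rangle$ has symbol $\langle\omega\cdot n\rangle$, $\partial_x^{-1}$ has symbol $\frac{1}{2\pi i\,\omega\cdot n}1_{n\ne0}$, where $\langle a\rangle=(1+|a|^2)^{1/2}$. $H^s_\omega$ is the usual Sobolev space $H^s(\mathbb{T}^2)$ (identified with quasi-periodic functions $x\mapsto g(x\omega)$), and $Y^\sigma_\omega$ is the closure of $C^\infty(\mathbb{T}^2)$ under $\|\langle\nabla\rangle^\sigma\langle\partial_x\rangle u\|_{L^2}+\|\langle\nabla\rangle^\sigma\partial_x^{-1}u\|_{L^2}$. *)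

theory Defs
  imports "HOL-Analysis.Analysis"
begin

text \<open>Functions on the torus T^2 are represented by their Fourier coefficient
  families u :: int \<times> int \<Rightarrow> complex (Plancherel identification).\<close>

type_synonym coeffs = "int \<times> int \<Rightarrow> complex"

definition jbr :: "real \<Rightarrow> real" where
  "jbr a = sqrt (1 + a\<^sup>2)"

definition jbrv :: "int \<times> int \<Rightarrow> real" where
  "jbrv n = sqrt (1 + (real_of_int (fst n))\<^sup>2 + (real_of_int (snd n))\<^sup>2)"

definition wdot :: "real \<times> real \<Rightarrow> int \<times> int \<Rightarrow> real" where
  "wdot \<omega> n = fst \<omega> * real_of_int (fst n) + snd \<omega> * real_of_int (snd n)"

definition Hs_weight :: "real \<Rightarrow> coeffs \<Rightarrow> int \<times> int \<Rightarrow> real" where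
  "Hs_weight s u n = jbrv n powr (2 * s) * (cmod (u n))\<^sup>2"

definition Hs_space :: "real \<Rightarrow> coeffs set" where
  "Hs_space s = {u. Hs_weight s u summable_on UNIV}"

definition Hs_norm :: "real \<Rightarrow> coeffs \<Rightarrow> real" where
  "Hs_norm s u = sqrt (infsum (Hs_weight s u) UNIV)"

definition Y_weight1 :: "real \<Rightarrow> real \<times> real \<Rightarrow> coeffs \<Rightarrow> int \<times> int \<Rightarrow> real" where
  "Y_weight1 \<sigma> \<omega> u n = (jbrv n powr \<sigma> * jbr (wdot \<omega> n))\<^sup>2 * (cmod (u n))\<^sup>2"

definition Y_weight2 :: "real \<Rightarrow> real \<times> real \<Rightarrow> coeffs \<Rightarrow> int \<times> int \<Rightarrow> real" where
  "Y_weight2 \<sigma> \<omega> u n =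
     (if n = 0 then 0 else (jbrv n powr \<sigma>)\<^sup>2 * (cmod (u n))\<^sup>2 / (2 * pi * wdot \<omega> n)\<^sup>2)"

definition Y_fin :: "real \<Rightarrow> real \<times> real \<Rightarrow> coeffs \<Rightarrow> bool" where
  "Y_fin \<sigma> \<omega> u \<longleftrightarrow> Y_weight1 \<sigma> \<omega> u summable_on UNIV \<and> Y_weight2 \<sigma> \<omega> u summable_on UNIV"

definition Y_norm :: "real \<Rightarrow> real \<times> real \<Rightarrow> coeffs \<Rightarrow> real" where
  "Y_norm \<sigma> \<omega> u = sqrt (infsum (Y_weight1 \<sigma> \<omega> u) UNIV) + sqrt (infsum (Y_weight2 \<sigma> \<omega> u) UNIV)"

text \<open>Fourier coefficients of C^infinity functions on T^2: rapidly decreasing families.\<close>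
definition smooth_coeffs :: "coeffs \<Rightarrow> bool" where
  "smooth_coeffs f \<longleftrightarrow> (\<forall>N::nat. \<exists>C. \<forall>n. jbrv n ^ N * cmod (f n) \<le> C)"

definition Y_space :: "real \<Rightarrow> real \<times> real \<Rightarrow> coeffs set" where
  "Y_space \<sigma> \<omega> = {v. \<exists>f :: nat \<Rightarrow> coeffs. (\<forall>k. smooth_coeffs (f k)) \<and>
      (\<forall>k. Y_fin \<sigma> \<omega> (\<lambda>n. v n - f k n)) \<and>
      (\<lambda>k. Y_norm \<sigma> \<omega> (\<lambda>n. v n - f k n)) \<longlonglongrightarrow> 0}"

definition approx_exponents :: "real \<Rightarrow> real set" where
  "approx_exponents \<alpha> = {\<nu>. \<nu> \<ge> 1 \<and>
     infinite {(p, q). (q::int) > 0 \<and> coprime (p::int) q \<and>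
                \<bar>\<alpha> - real_of_int p / real_of_int q\<bar> < real_of_int q powr (-\<nu>)}}"

definition irr_measure :: "real \<Rightarrow> real" where
  "irr_measure \<alpha> = Sup (approx_exponents \<alpha>)"

end

theory Submission
  imports Defs
begin

text \<open>Fix \<nu> strictly between \<mu>(\<alpha>) and s - \<sigma> + 1. Only finitely many reduced fractions
  approximate \<alpha> to order \<nu>, so |q\<alpha> - p| \<ge> c q^(1-\<nu>) for all p and all q > 0, hence the
  small divisor obeys |\<omega>\<cdot>n| \<ge> K \<langle>n\<rangle>^(1-\<nu>) for n \<noteq> 0 and the multiplier \<langle>n\<rangle>^\<sigma> / |\<omega>\<cdot>n| is
  bounded by a multiple of \<langle>n\<rangle>^s. The other multiplier \<langle>n\<rangle>^\<sigma> \<langle>\<omega>\<cdot>n\<rangle> \<le> C \<langle>n\<rangle>^(\<sigma>+1) is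
  handled by Dirichlet's bound \<mu>(\<alpha>) \<ge> 2. Density of smooth functions follows by truncating
  Fourier series to squares.\<close>

lemma irrational_two_in_approx_exponents:
  assumes "\<alpha> \<notin> \<rat>"
  shows "2 \<in> approx_exponents \<alpha>"
proof -
  have "approx_set \<alpha> \<subseteq> {(p, q). (q::int) > 0 \<and> coprime (p::int) q \<and>
          \<bar>\<alpha> - real_of_int p / real_of_int q\<bar> < real_of_int q powr (-2)}"
    by (auto simp: approx_set_def powr_minus divide_inverse power2_eq_square)
  moreover have "infinite (approx_set \<alpha>)"
    using assms rational_iff_finite_approx_set by blast
  ultimately show ?thesis
    unfolding approx_exponents_def using infinite_super by auto
qed

lemma irr_measure_ge_two:
  assumes "\<alpha> \<notin> \<rat>" and "bdd_above (approx_exponents \<alpha>)"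
  shows "2 \<le> irr_measure \<alpha>"
  unfolding irr_measure_def
  using cSup_upper[OF irrational_two_in_approx_exponents[OF assms(1)] assms(2)] .

lemma not_in_approx_exponents_if_gt_irr_measure:
  assumes "bdd_above (approx_exponents \<alpha>)" and "irr_measure \<alpha> < \<nu>"
  shows "\<nu> \<notin> approx_exponents \<alpha>"
  using assms cSup_upper unfolding irr_measure_def by fastforce

lemma irrational_mult_neq_of_int:
  assumes "\<alpha> \<notin> \<rat>" and "q \<noteq> 0"
  shows "real_of_int q * \<alpha> \<noteq> real_of_int p"
proof
  assume "real_of_int q * \<alpha> = real_of_int p"
  then have "\<alpha> = real_of_int p / real_of_int q" using assms(2) by (auto simp: field_simps)
  then show False using assms(1) by auto
qed

lemma coprime_approximation_lower_bound:
  fixes \<alpha> \<nu> :: real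
  assumes irr: "\<alpha> \<notin> \<rat>" and "1 \<le> \<nu>" and "\<nu> \<notin> approx_exponents \<alpha>"
  obtains c where "0 < c" "c \<le> 1"
    and "\<And>p q. 0 < q \<Longrightarrow> coprime p q \<Longrightarrow>
           c * real_of_int q powr (1 - \<nu>) \<le> \<bar>real_of_int q * \<alpha> - real_of_int p\<bar>"
proof -
  define E where "E = {(p, q). (q::int) > 0 \<and> coprime (p::int) q \<and>
                \<bar>\<alpha> - real_of_int p / real_of_int q\<bar> < real_of_int q powr (-\<nu>)}"
  have "finite E" using assms(2,3) unfolding approx_exponents_def E_def by auto
  define g where "g = (\<lambda>(p::int, q::int). \<bar>real_of_int q * \<alpha> - real_of_int p\<bar> * real_of_int q powr (\<nu> - 1))"
  define c where "c = Min (insert 1 (g ` E))"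
  have "g x > 0" if "x \<in> E" for x
    using that irrational_mult_neq_of_int[OF irr] by (auto simp: E_def g_def)
  then have "c > 0" unfolding c_def using \<open>finite E\<close> by (subst Min_gr_iff) auto
  moreover have "c \<le> 1" unfolding c_def using \<open>finite E\<close> by (intro Min_le) auto
  moreover have "c * real_of_int q powr (1 - \<nu>) \<le> \<bar>real_of_int q * \<alpha> - real_of_int p\<bar>"
    if q: "q > 0" and "coprime p q" for p q :: int
  proof (cases "(p, q) \<in> E")
    case True
    then have "c \<le> \<bar>real_of_int q * \<alpha> - real_of_int p\<bar> * real_of_int q powr (\<nu> - 1)"
      unfolding c_def g_def using \<open>finite E\<close> by (intro Min_le) auto
    then have "c * real_of_int q powr (1 - \<nu>) \<le>
        \<bar>real_of_int q * \<alpha> - real_of_int p\<bar> * (real_of_int q powr (\<nu> - 1) * real_of_int q powr (1 - \<nu>))"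
      using q by (simp add: mult_right_mono mult.assoc)
    also have "real_of_int q powr (\<nu> - 1) * real_of_int q powr (1 - \<nu>) = 1"
      using q by (simp add: powr_add[symmetric])
    finally show ?thesis by simp
  next
    case False
    then have "real_of_int q powr (-\<nu>) \<le> \<bar>\<alpha> - real_of_int p / real_of_int q\<bar>"
      using q \<open>coprime p q\<close> by (auto simp: E_def)
    then have "real_of_int q * real_of_int q powr (-\<nu>) \<le> real_of_int q * \<bar>\<alpha> - real_of_int p / real_of_int q\<bar>"
      using q by (intro mult_left_mono) auto
    also have "\<dots> = \<bar>real_of_int q * \<alpha> - real_of_int p\<bar>"
      using q by (simp add: abs_mult field_simps)
    also have "real_of_int q * real_of_int q powr (-\<nu>) = real_of_int q powr (1 - \<nu>)"
      using q by (simp add: powr_add[symmetric] powr_mult_base)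
    finally show ?thesis
      using \<open>c \<le> 1\<close> \<open>c > 0\<close> mult_left_le_one_le[of "real_of_int q powr (1 - \<nu>)" c] by simp
  qed
  ultimately show ?thesis using that by blast
qed

lemma approximation_lower_bound:
  fixes \<alpha> \<nu> :: real
  assumes "\<alpha> \<notin> \<rat>" and "1 \<le> \<nu>" and "\<nu> \<notin> approx_exponents \<alpha>"
  obtains c where "0 < c" "c \<le> 1"
    and "\<And>p q. 0 < q \<Longrightarrow> c * real_of_int q powr (1 - \<nu>) \<le> \<bar>real_of_int q * \<alpha> - real_of_int p\<bar>"
proof -
  obtain c where c: "0 < c" "c \<le> 1"
    and cop: "\<And>p q. 0 < q \<Longrightarrow> coprime p q \<Longrightarrow>
           c * real_of_int q powr (1 - \<nu>) \<le> \<bar>real_of_int q * \<alpha> - real_of_int p\<bar>"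
    using coprime_approximation_lower_bound[OF assms] by blast
  have "c * real_of_int q powr (1 - \<nu>) \<le> \<bar>real_of_int q * \<alpha> - real_of_int p\<bar>" if q: "q > 0" for p q :: int
  proof -
    define d where "d = gcd p q"
    have d0: "d > 0" using q by (simp add: d_def)
    obtain p' q' where pq: "p = d * p'" "q = d * q'" and "coprime p' q'"
      using gcd_coprime_exists[of p q] q d_def by (metis gcd_eq_0_iff less_irrefl mult.commute)
    have q': "q' > 0" using pq(2) q d0 by (simp add: zero_less_mult_iff)
    have "real_of_int d powr (1 - \<nu>) \<le> real_of_int d"
      using powr_mono[of "1 - \<nu>" 1 "real_of_int d"] d0 \<open>1 \<le> \<nu>\<close> by simp
    then have "c * real_of_int q powr (1 - \<nu>) \<le> real_of_int d * (c * real_of_int q' powr (1 - \<nu>))"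
      using pq(2) d0 q' c by (simp add: powr_mult mult_right_mono mult_left_mono)
    also have "\<dots> \<le> real_of_int d * \<bar>real_of_int q' * \<alpha> - real_of_int p'\<bar>"
      using cop[OF q' \<open>coprime p' q'\<close>] d0 by (intro mult_left_mono) auto
    also have "\<dots> = \<bar>real_of_int d * (real_of_int q' * \<alpha> - real_of_int p')\<bar>"
      using d0 by (simp add: abs_mult)
    also have "\<dots> = \<bar>real_of_int q * \<alpha> - real_of_int p\<bar>"
      using pq by (simp add: algebra_simps)
    finally show ?thesis .
  qed
  then show ?thesis using that c by blast
qed

lemma jbrv_ge_1: "1 \<le> jbrv n"
  unfolding jbrv_def by simp

lemma abs_fst_le_jbrv: "\<bar>real_of_int (fst n)\<bar> \<le> jbrv n"
  unfolding jbrv_def by (rule real_le_rsqrt) simp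

lemma abs_snd_le_jbrv: "\<bar>real_of_int (snd n)\<bar> \<le> jbrv n"
  unfolding jbrv_def by (rule real_le_rsqrt) simp

lemma abs_wdot_le: "\<bar>wdot \<omega> n\<bar> \<le> (\<bar>fst \<omega>\<bar> + \<bar>snd \<omega>\<bar>) * jbrv n"
proof -
  have "\<bar>wdot \<omega> n\<bar> \<le> \<bar>fst \<omega>\<bar> * \<bar>real_of_int (fst n)\<bar> + \<bar>snd \<omega>\<bar> * \<bar>real_of_int (snd n)\<bar>"
    unfolding wdot_def by (metis abs_mult abs_triangle_ineq)
  also have "\<dots> \<le> \<bar>fst \<omega>\<bar> * jbrv n + \<bar>snd \<omega>\<bar> * jbrv n"
    by (intro add_mono mult_left_mono abs_fst_le_jbrv abs_snd_le_jbrv) auto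
  finally show ?thesis by (simp add: algebra_simps)
qed

lemma small_divisor_lower_bound:
  fixes \<omega> :: "real \<times> real" and \<nu> :: real
  assumes "snd \<omega> \<noteq> 0" and "fst \<omega> / snd \<omega> \<notin> \<rat>"
    and "1 \<le> \<nu>" and "\<nu> \<notin> approx_exponents (fst \<omega> / snd \<omega>)"
  obtains K where "0 < K" and "\<And>n. n \<noteq> 0 \<Longrightarrow> K * jbrv n powr (1 - \<nu>) \<le> \<bar>wdot \<omega> n\<bar>"
proof -
  define \<alpha> where "\<alpha> = fst \<omega> / snd \<omega>"
  obtain c where c: "0 < c" "c \<le> 1"
    and dio: "\<And>p q. 0 < q \<Longrightarrow> c * real_of_int q powr (1 - \<nu>) \<le> \<bar>real_of_int q * \<alpha> - real_of_int p\<bar>"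
    using approximation_lower_bound assms(2-4) unfolding \<alpha>_def by blast
  have "c * jbrv (a, b) powr (1 - \<nu>) \<le> \<bar>real_of_int a * \<alpha> + real_of_int b\<bar>"
    if "(a, b) \<noteq> 0" for a b
  proof (cases "a = 0")
    case True
    then have "1 \<le> \<bar>real_of_int a * \<alpha> + real_of_int b\<bar>" using that by (simp add: zero_prod_def)
    moreover have "jbrv (a, b) powr (1 - \<nu>) \<le> 1"
      using powr_mono[of "1 - \<nu>" 0 "jbrv (a, b)"] jbrv_ge_1[of "(a, b)"] \<open>1 \<le> \<nu>\<close> by simp
    ultimately show ?thesis using c by (meson mult_le_one order.trans powr_ge_zero)
  next
    case False
    have "jbrv (a, b) powr (1 - \<nu>) \<le> real_of_int \<bar>a\<bar> powr (1 - \<nu>)"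
      using abs_fst_le_jbrv[of "(a, b)"] False \<open>1 \<le> \<nu>\<close> by (intro powr_mono2') auto
    then have "c * jbrv (a, b) powr (1 - \<nu>) \<le> c * real_of_int \<bar>a\<bar> powr (1 - \<nu>)"
      using c by simp
    also have "\<dots> \<le> \<bar>real_of_int \<bar>a\<bar> * \<alpha> - real_of_int (- sgn a * b)\<bar>"
      using dio[of "\<bar>a\<bar>" "- sgn a * b"] False by simp
    also have "\<dots> = \<bar>real_of_int a * \<alpha> + real_of_int b\<bar>"
      using False by (cases "a > 0") (auto simp: abs_minus_commute)
    finally show ?thesis .
  qed
  moreover have "wdot \<omega> n = snd \<omega> * (real_of_int (fst n) * \<alpha> + real_of_int (snd n))" for n
    using assms(1) by (simp add: wdot_def \<alpha>_def field_simps)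
  ultimately have "\<bar>snd \<omega>\<bar> * c * jbrv n powr (1 - \<nu>) \<le> \<bar>wdot \<omega> n\<bar>" if "n \<noteq> 0" for n
    using that by (cases n) (simp add: abs_mult mult.assoc mult_left_mono)
  moreover have "0 < \<bar>snd \<omega>\<bar> * c" using assms(1) c by simp
  ultimately show ?thesis using that by blast
qed

lemma Y_multiplier1_le:
  assumes "\<sigma> + 1 \<le> s"
  shows "(jbrv n powr \<sigma> * jbr (wdot \<omega> n))\<^sup>2 \<le> (1 + (\<bar>fst \<omega>\<bar> + \<bar>snd \<omega>\<bar>)\<^sup>2) * jbrv n powr (2 * s)"
proof -
  define J where "J = jbrv n"
  define M where "M = \<bar>fst \<omega>\<bar> + \<bar>snd \<omega>\<bar>"
  have J1: "1 \<le> J" by (simp add: J_def jbrv_ge_1)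
  have "\<bar>wdot \<omega> n\<bar> \<le> \<bar>M * J\<bar>"
    using abs_wdot_le[of \<omega> n] J1 by (simp add: J_def M_def abs_mult)
  then have "(wdot \<omega> n)\<^sup>2 \<le> (M * J)\<^sup>2"
    by (simp only: abs_le_square_iff)
  moreover have "1 \<le> J\<^sup>2" using J1 by (simp add: one_le_power)
  ultimately have jbr_le: "(jbr (wdot \<omega> n))\<^sup>2 \<le> (1 + M\<^sup>2) * J\<^sup>2"
    unfolding jbr_def by (simp add: power_mult_distrib algebra_simps)
  have "(J powr \<sigma> * jbr (wdot \<omega> n))\<^sup>2 = J powr (2 * \<sigma>) * (jbr (wdot \<omega> n))\<^sup>2"
    using J1 by (simp add: power_mult_distrib powr_power)
  also have "\<dots> \<le> J powr (2 * \<sigma>) * ((1 + M\<^sup>2) * J\<^sup>2)"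
    by (intro mult_left_mono jbr_le) auto
  also have "\<dots> = (1 + M\<^sup>2) * J powr (2 * \<sigma> + 2)"
    using J1 by (simp add: powr_add powr_realpow)
  also have "\<dots> \<le> (1 + M\<^sup>2) * J powr (2 * s)"
    using J1 assms by (intro mult_left_mono powr_mono) auto
  finally show ?thesis by (simp add: J_def M_def)
qed

lemma Y_multiplier2_le:
  assumes "0 < K" and low: "K * jbrv n powr (1 - \<nu>) \<le> \<bar>wdot \<omega> n\<bar>"
    and "\<sigma> + \<nu> - 1 \<le> s"
  shows "(jbrv n powr \<sigma>)\<^sup>2 / (2 * pi * wdot \<omega> n)\<^sup>2 \<le> 1 / (2 * pi * K)\<^sup>2 * jbrv n powr (2 * s)"
proof -
  define J where "J = jbrv n"
  have J1: "1 \<le> J" by (simp add: J_def jbrv_ge_1)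
  have L0: "0 < K * J powr (1 - \<nu>)" using \<open>0 < K\<close> J1 by simp
  then have le: "(2 * pi * (K * J powr (1 - \<nu>)))\<^sup>2 \<le> (2 * pi * wdot \<omega> n)\<^sup>2"
    using low by (simp add: J_def abs_le_square_iff[symmetric] abs_mult)
  moreover have pos: "0 < (2 * pi * (K * J powr (1 - \<nu>)))\<^sup>2" using L0 \<open>0 < K\<close> J1 by simp
  ultimately have "(J powr \<sigma>)\<^sup>2 / (2 * pi * wdot \<omega> n)\<^sup>2 \<le> (J powr \<sigma>)\<^sup>2 / (2 * pi * (K * J powr (1 - \<nu>)))\<^sup>2"
    by (intro divide_left_mono mult_pos_pos) auto
  also have "\<dots> = 1 / (2 * pi * K)\<^sup>2 * (J powr (2 * \<sigma>) / J powr (2 - 2 * \<nu>))"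
    using \<open>0 < K\<close> J1 by (simp add: power_mult_distrib powr_power algebra_simps)
  also have "J powr (2 * \<sigma>) / J powr (2 - 2 * \<nu>) = J powr (2 * \<sigma> + 2 * \<nu> - 2)"
    using J1 by (simp add: powr_diff[symmetric] algebra_simps)
  also have "1 / (2 * pi * K)\<^sup>2 * J powr (2 * \<sigma> + 2 * \<nu> - 2) \<le> 1 / (2 * pi * K)\<^sup>2 * J powr (2 * s)"
    using J1 assms(3) by (intro mult_left_mono powr_mono) auto
  finally show ?thesis by (simp add: J_def)
qed

lemma summable_on_infsum_le_scaled:
  fixes f g :: "'a \<Rightarrow> real"
  assumes g: "g summable_on A"
    and nonneg: "\<And>x. x \<in> A \<Longrightarrow> 0 \<le> f x" and le: "\<And>x. x \<in> A \<Longrightarrow> f x \<le> C * g x"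
  shows "f summable_on A" and "infsum f A \<le> C * infsum g A"
proof -
  have Cg: "(\<lambda>x. C * g x) summable_on A" using g by (rule summable_on_cmult_right)
  then show f: "f summable_on A" by (rule summable_on_comparison_test) (use le nonneg in auto)
  have "infsum f A \<le> infsum (\<lambda>x. C * g x) A" by (rule infsum_mono[OF f Cg le])
  also have "\<dots> = C * infsum g A" by (rule infsum_cmult_right) (use g in simp)
  finally show "infsum f A \<le> C * infsum g A" .
qed

lemma Y_norm_le_Hs_norm_if_multipliers_le:
  assumes "0 \<le> C1" and "0 \<le> C2"
    and mult1: "\<And>n. (jbrv n powr \<sigma> * jbr (wdot \<omega> n))\<^sup>2 \<le> C1 * jbrv n powr (2 * s)"
    and mult2: "\<And>n. n \<noteq> 0 \<Longrightarrow> (jbrv n powr \<sigma>)\<^sup>2 / (2 * pi * wdot \<omega> n)\<^sup>2 \<le> C2 * jbrv n powr (2 * s)"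
    and "u \<in> Hs_space s"
  shows "Y_fin \<sigma> \<omega> u \<and> Y_norm \<sigma> \<omega> u \<le> (sqrt C1 + sqrt C2) * Hs_norm s u"
proof -
  have Hs: "Hs_weight s u summable_on UNIV" using \<open>u \<in> Hs_space s\<close> by (simp add: Hs_space_def)
  have "Y_weight1 \<sigma> \<omega> u n \<le> C1 * Hs_weight s u n" for n
    using mult_right_mono[OF mult1[of n], of "(cmod (u n))\<^sup>2"]
    by (simp add: Y_weight1_def Hs_weight_def mult.assoc)
  then have Y1: "Y_weight1 \<sigma> \<omega> u summable_on UNIV"
      "infsum (Y_weight1 \<sigma> \<omega> u) UNIV \<le> C1 * infsum (Hs_weight s u) UNIV"
    using summable_on_infsum_le_scaled[OF Hs, of "Y_weight1 \<sigma> \<omega> u" C1] by (auto simp: Y_weight1_def)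
  have "Y_weight2 \<sigma> \<omega> u n \<le> C2 * Hs_weight s u n" for n
    using mult_right_mono[OF mult2[of n], of "(cmod (u n))\<^sup>2"] \<open>0 \<le> C2\<close>
    by (cases "n = 0") (simp_all add: Y_weight2_def Hs_weight_def mult.assoc)
  then have Y2: "Y_weight2 \<sigma> \<omega> u summable_on UNIV"
      "infsum (Y_weight2 \<sigma> \<omega> u) UNIV \<le> C2 * infsum (Hs_weight s u) UNIV"
    using summable_on_infsum_le_scaled[OF Hs, of "Y_weight2 \<sigma> \<omega> u" C2] by (auto simp: Y_weight2_def)
  have "Y_norm \<sigma> \<omega> u \<le> sqrt (C1 * infsum (Hs_weight s u) UNIV) + sqrt (C2 * infsum (Hs_weight s u) UNIV)"
    unfolding Y_norm_def using Y1(2) Y2(2) by (intro add_mono real_sqrt_le_mono)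
  also have "\<dots> = (sqrt C1 + sqrt C2) * Hs_norm s u"
    by (simp add: Hs_norm_def real_sqrt_mult algebra_simps)
  finally show ?thesis using Y1(1) Y2(1) by (simp add: Y_fin_def)
qed

lemma Y_norm_le_Hs_norm:
  fixes \<omega> :: "real \<times> real" and s \<sigma> \<nu> :: real
  assumes "snd \<omega> \<noteq> 0" and "fst \<omega> / snd \<omega> \<notin> \<rat>"
    and "2 \<le> \<nu>" and "\<nu> \<notin> approx_exponents (fst \<omega> / snd \<omega>)" and "\<sigma> + \<nu> - 1 \<le> s"
  obtains C where "\<And>u. u \<in> Hs_space s \<Longrightarrow> Y_fin \<sigma> \<omega> u \<and> Y_norm \<sigma> \<omega> u \<le> C * Hs_norm s u"
proof -
  obtain K where "0 < K" and K: "\<And>n. n \<noteq> 0 \<Longrightarrow> K * jbrv n powr (1 - \<nu>) \<le> \<bar>wdot \<omega> n\<bar>"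
    using small_divisor_lower_bound[of \<omega> \<nu>] assms(1-4) by auto
  have "Y_fin \<sigma> \<omega> u \<and> Y_norm \<sigma> \<omega> u \<le>
      (sqrt (1 + (\<bar>fst \<omega>\<bar> + \<bar>snd \<omega>\<bar>)\<^sup>2) + sqrt (1 / (2 * pi * K)\<^sup>2)) * Hs_norm s u"
    if "u \<in> Hs_space s" for u
  proof (rule Y_norm_le_Hs_norm_if_multipliers_le[OF _ _ _ _ that])
    show "(jbrv n powr \<sigma> * jbr (wdot \<omega> n))\<^sup>2 \<le> (1 + (\<bar>fst \<omega>\<bar> + \<bar>snd \<omega>\<bar>)\<^sup>2) * jbrv n powr (2 * s)" for n
      by (rule Y_multiplier1_le) (use assms(3,5) in linarith)
    show "(jbrv n powr \<sigma>)\<^sup>2 / (2 * pi * wdot \<omega> n)\<^sup>2 \<le> 1 / (2 * pi * K)\<^sup>2 * jbrv n powr (2 * s)"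
      if "n \<noteq> 0" for n
      using Y_multiplier2_le[OF \<open>0 < K\<close> K[OF that] assms(5)] .
  qed auto
  then show ?thesis using that by blast
qed

definition int_square :: "nat \<Rightarrow> (int \<times> int) set" where
  "int_square k = {- int k..int k} \<times> {- int k..int k}"

lemma finite_int_square [simp]: "finite (int_square k)"
  by (simp add: int_square_def)

lemma filterlim_int_square: "filterlim int_square (finite_subsets_at_top UNIV) sequentially"
  unfolding filterlim_finite_subsets_at_top
proof (intro allI impI, elim conjE)
  fix X :: "(int \<times> int) set" assume "finite X"
  define m where "m = Max (insert 0 ((\<lambda>x. nat \<bar>fst x\<bar> + nat \<bar>snd x\<bar>) ` X))"
  have "X \<subseteq> int_square k" if "m \<le> k" for k
  proof
    fix x assume "x \<in> X"
    then have "nat \<bar>fst x\<bar> + nat \<bar>snd x\<bar> \<le> m" unfolding m_def using \<open>finite X\<close> by (intro Max_ge) auto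
    then show "x \<in> int_square k" using that by (cases x) (auto simp: int_square_def)
  qed
  then show "\<forall>\<^sub>F k in sequentially. finite (int_square k) \<and> X \<subseteq> int_square k \<and> int_square k \<subseteq> UNIV"
    by (auto simp: eventually_sequentially)
qed

lemma tendsto_infsum_outside:
  fixes w :: "'a \<Rightarrow> real"
  assumes "w summable_on UNIV" and "filterlim B (finite_subsets_at_top UNIV) F"
    and "\<And>k. finite (B k)"
  shows "((\<lambda>k. infsum w (- B k)) \<longlongrightarrow> 0) F"
proof -
  have "infsum w (- B k) = infsum w UNIV - sum w (B k)" for k
    using infsum_Diff[OF assms(1) summable_on_finite[OF assms(3)], of k] assms(3)
    by (simp add: Compl_eq_Diff_UNIV)
  moreover have "((\<lambda>k. sum w (B k)) \<longlongrightarrow> infsum w UNIV) F"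
    using filterlim_compose[OF infsum_tendsto[OF assms(1)] assms(2)] .
  then have "((\<lambda>k. infsum w UNIV - sum w (B k)) \<longlongrightarrow> infsum w UNIV - infsum w UNIV) F"
    by (intro tendsto_diff tendsto_const)
  ultimately show ?thesis by simp
qed

lemma smooth_coeffs_if_finite_support:
  assumes "finite {n. f n \<noteq> 0}"
  shows "smooth_coeffs f"
  unfolding smooth_coeffs_def
proof
  fix N :: nat
  have "jbrv n ^ N * cmod (f n) \<le> (\<Sum>m\<in>{n. f n \<noteq> 0}. jbrv m ^ N * cmod (f m))" for n
  proof (cases "f n = 0")
    case False
    then show ?thesis using assms by (intro member_le_sum) (auto simp: jbrv_def)
  qed (auto simp: jbrv_def intro: sum_nonneg)
  then show "\<exists>C. \<forall>n. jbrv n ^ N * cmod (f n) \<le> C" by blast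
qed

lemma Hs_space_tail_tendsto_0:
  assumes "u \<in> Hs_space s"
  shows "(\<lambda>n. if n \<in> int_square k then 0 else u n) \<in> Hs_space s"
    and "(\<lambda>k. Hs_norm s (\<lambda>n. if n \<in> int_square k then 0 else u n)) \<longlonglongrightarrow> 0"
proof -
  define w where "w = Hs_weight s u"
  have w: "w summable_on UNIV" using assms by (simp add: Hs_space_def w_def)
  have tail: "Hs_weight s (\<lambda>n. if n \<in> int_square k then 0 else u n) =
      (\<lambda>n. if n \<in> int_square k then 0 else w n)" for k
    by (auto simp: Hs_weight_def w_def)
  show "(\<lambda>n. if n \<in> int_square k then 0 else u n) \<in> Hs_space s"
    unfolding Hs_space_def tail
    by (auto intro!: summable_on_comparison_test[OF w] simp: w_def Hs_weight_def)
  have "infsum (\<lambda>n. if n \<in> int_square k then 0 else w n) UNIV = infsum w (- int_square k)" for k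
    by (rule infsum_cong_neutral) auto
  then have "Hs_norm s (\<lambda>n. if n \<in> int_square k then 0 else u n) = sqrt (infsum w (- int_square k))" for k
    by (simp add: Hs_norm_def tail)
  moreover have "(\<lambda>k. sqrt (infsum w (- int_square k))) \<longlonglongrightarrow> sqrt 0"
    by (intro tendsto_real_sqrt tendsto_infsum_outside[OF w filterlim_int_square]) simp
  ultimately show "(\<lambda>k. Hs_norm s (\<lambda>n. if n \<in> int_square k then 0 else u n)) \<longlonglongrightarrow> 0"
    by simp
qed

lemma Y_norm_nonneg: "0 \<le> Y_norm \<sigma> \<omega> u"
  unfolding Y_norm_def by (intro add_nonneg_nonneg real_sqrt_ge_zero infsum_nonneg)
    (auto simp: Y_weight1_def Y_weight2_def)

lemma Hs_space_subset_Y_space_if_bounded: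
  assumes bound: "\<And>u. u \<in> Hs_space s \<Longrightarrow> Y_fin \<sigma> \<omega> u \<and> Y_norm \<sigma> \<omega> u \<le> C * Hs_norm s u"
  shows "Hs_space s \<subseteq> Y_space \<sigma> \<omega>"
proof
  fix u assume u: "u \<in> Hs_space s"
  define f where "f = (\<lambda>k n. if n \<in> int_square k then u n else 0)"
  have diff: "(\<lambda>n. u n - f k n) = (\<lambda>n. if n \<in> int_square k then 0 else u n)" for k
    by (auto simp: f_def)
  have "smooth_coeffs (f k)" for k
    by (rule smooth_coeffs_if_finite_support, rule finite_subset[of _ "int_square k"])
      (auto simp: f_def)
  moreover have "Y_fin \<sigma> \<omega> (\<lambda>n. u n - f k n)" for k
    using bound[OF Hs_space_tail_tendsto_0(1)[OF u]] by (simp add: diff)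
  moreover have "(\<lambda>k. Y_norm \<sigma> \<omega> (\<lambda>n. u n - f k n)) \<longlonglongrightarrow> 0"
  proof (rule tendsto_sandwich[OF _ _ tendsto_const])
    show "(\<lambda>k. C * Hs_norm s (\<lambda>n. u n - f k n)) \<longlonglongrightarrow> 0"
      using tendsto_mult_left[OF Hs_space_tail_tendsto_0(2)[OF u], of C] by (simp add: diff)
  qed (use bound[OF Hs_space_tail_tendsto_0(1)[OF u]] Y_norm_nonneg in \<open>auto simp: diff\<close>)
  ultimately show "u \<in> Y_space \<sigma> \<omega>" unfolding Y_space_def by blast
qed

theorem lemma7p1:
  fixes \<omega> :: "real \<times> real" and s \<sigma> :: real
  assumes "snd \<omega> \<noteq> 0"
    and "fst \<omega> / snd \<omega> \<notin> \<rat>"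
    and "bdd_above (approx_exponents (fst \<omega> / snd \<omega>))"
    and "0 \<le> \<sigma>"
    and "\<sigma> < s - irr_measure (fst \<omega> / snd \<omega>) + 1"
  shows "Hs_space s \<subseteq> Y_space \<sigma> \<omega> \<and>
         (\<exists>C. \<forall>u \<in> Hs_space s. Y_norm \<sigma> \<omega> u \<le> C * Hs_norm s u)"
proof -
  define \<mu> where "\<mu> = irr_measure (fst \<omega> / snd \<omega>)"
  define \<nu> where "\<nu> = (\<mu> + s - \<sigma> + 1) / 2"
  have "\<sigma> < s - \<mu> + 1" using assms(5) by (simp add: \<mu>_def)
  then have "\<mu> < \<nu>" and \<nu>_le: "\<sigma> + \<nu> - 1 \<le> s" by (simp_all add: \<nu>_def field_simps)
  then have "\<nu> \<notin> approx_exponents (fst \<omega> / snd \<omega>)"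
    using not_in_approx_exponents_if_gt_irr_measure[OF assms(3)] by (simp add: \<mu>_def)
  moreover have "2 \<le> \<nu>"
    using irr_measure_ge_two[OF assms(2,3)] \<open>\<mu> < \<nu>\<close> by (simp add: \<mu>_def)
  ultimately obtain C
    where "\<And>u. u \<in> Hs_space s \<Longrightarrow> Y_fin \<sigma> \<omega> u \<and> Y_norm \<sigma> \<omega> u \<le> C * Hs_norm s u"
    using Y_norm_le_Hs_norm[OF assms(1,2) _ _ \<nu>_le] by blast
  then show ?thesis using Hs_space_subset_Y_space_if_bounded by blast
qed

end
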